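(* Let $P_0=\mathrm{SO}(5)\times_{\phi_0}\mathrm{SO}(3)\cong V^{5,2}\times\mathrm{SO}(3)$ be the homogeneous $\mathrm{SO}(3)$-principal bundle over $V^{5,2}=\mathrm{SO}(5)/\mathrm{SO}(3)$ induced by the trivial homomorphism $\phi_0:\mathrm{SO}(3)\to\mathrm{SO}(3)$. The $\mathrm{SO}(5)$-invariant connections on $P_0$ are exactly those corresponding to linear maps $\alpha:\mathfrak{so}(5)\to\mathfrak{so}(3)$ of the form $$\alpha=e^1\otimes(b_8e_8+b_9e_9+b_{10}e_{10}),\qquad b_8,b_9,b_{10}\in\mathbb{R}.$$ Furthermore, the curvature $F_\alpha$ of such a connection lies in $\Omega^2_1(\mathfrak{so}(3))$, i.e. it is of the form $\omega\otimes v$ times a constant for a fixed $v\in\mathfrak{so}(3)$, where $\omega$ is the invariant 2-form corresponding to $e^{25}+e^{36}+e^{47}$.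
   Context: Basis of $\mathfrak{so}(5)$ (with $E_{ij}$ the elementary $5\times5$ matrices): $e_1=E_{12}-E_{21}$, $e_2=E_{13}-E_{31}$, $e_3=E_{14}-E_{41}$, $e_4=E_{15}-E_{51}$, $e_5=E_{23}-E_{32}$, $e_6=E_{24}-E_{42}$, $e_7=E_{25}-E_{52}$, $e_8=E_{34}-E_{43}$, $e_9=E_{35}-E_{53}$, $e_{10}=E_{54}-E_{45}$; bracket = commutator. $\mathrm{SO}(3)\subset\mathrm{SO}(5)$ has Lie algebra $\mathfrak{so}(3)=\mathrm{span}\{e_8,e_9,e_{10}\}$; the target group $\mathrm{SO}(3)$ is identified with this subgroup. $e^1,\dots,e^{10}$ is the dual basis of $\mathfrak{so}(5)^*$. For a homomorphism $\phi:H\to K$, $P=G\times_\phi K\to G/H$ is a homogeneous $K$-bundle, and $G$-invariant connections on $P$ correspond bijectively to linear maps $\alpha:\mathfrak g\to\mathfrak k$ with $\alpha|_{\mathfrak h}=\phi_*$ and $\alpha\circ\mathrm{Ad}(h)=\mathrm{Ad}(\phi(h))\circ\alpha$ for all $h\in H$ (Wang's theorem). The curvature of the connection is the invariant $\mathfrak k$-valued 2-form given on $\mathfrak m=\mathrm{span}\{e_1,\dots,e_7\}$ by $F(X,Y)=[\alpha X,\alpha Y]-\alpha([X,Y])$. $\Omega^2_1(\mathfrak{so}(3))$ denotes $\mathfrak{so}(3)$-valued 2-forms of the form $f\,\omega$ with $\omega=e^{25}+e^{36}+e^{47}$ (the transverse Kähler form line in the $\mathrm{SU}(3)$-decomposition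 $\Omega^2_1\oplus\Omega^2_6\oplus\Omega^2_8$ of transverse 2-forms). *)

theory Defs
  imports "HOL-Analysis.Analysis" "HOL-Library.Numeral_Type"
begin

type_synonym mat5 = "real^5^5"

text \<open>Matrix indices 1..5 are mapped bijectively onto the index type 5
  (index k corresponds to of_nat k, so 5 corresponds to 0).\<close>
definition idx :: "nat \<Rightarrow> 5" where "idx k = of_nat k"

definition Emat :: "nat \<Rightarrow> nat \<Rightarrow> mat5" where
  "Emat i j = (\<chi> a b. if a = idx i \<and> b = idx j then 1 else 0)"

definition ent :: "mat5 \<Rightarrow> nat \<Rightarrow> nat \<Rightarrow> real" where
  "ent X i j = X $ idx i $ idx j"

text \<open>Positions (i,j) with e_k = E_ij - E_ji.\<close>
definition bpos :: "nat \<Rightarrow> nat \<times> nat" where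
  "bpos k = (if k = 1 then (1,2) else if k = 2 then (1,3) else if k = 3 then (1,4)
     else if k = 4 then (1,5) else if k = 5 then (2,3) else if k = 6 then (2,4)
     else if k = 7 then (2,5) else if k = 8 then (3,4) else if k = 9 then (3,5)
     else (5,4))"

definition ebas :: "nat \<Rightarrow> mat5" where
  "ebas k = Emat (fst (bpos k)) (snd (bpos k)) - Emat (snd (bpos k)) (fst (bpos k))"

text \<open>Dual basis e^1..e^10 (coordinates w.r.t. e_1..e_10 on so(5)).\<close>
definition edual :: "nat \<Rightarrow> mat5 \<Rightarrow> real" where
  "edual k X = ent X (fst (bpos k)) (snd (bpos k))"

definition bracket :: "mat5 \<Rightarrow> mat5 \<Rightarrow> mat5" where
  "bracket X Y = X ** Y - Y ** X"

definition so5 :: "mat5 set" where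
  "so5 = span (ebas ` {1..10})"

definition so3 :: "mat5 set" where
  "so3 = span (ebas ` {8..10})"

definition mspace :: "mat5 set" where
  "mspace = span (ebas ` {1..7})"

text \<open>The group SO(5) and the subgroup SO(3) (acting on coordinates 3,4,5).\<close>
definition SO5 :: "mat5 set" where
  "SO5 = {g. orthogonal_matrix g \<and> det g = 1}"

definition SO3sub :: "mat5 set" where
  "SO3sub = {g \<in> SO5. g *v axis (idx 1) 1 = axis (idx 1) 1 \<and> g *v axis (idx 2) 1 = axis (idx 2) 1}"

definition Ad :: "mat5 \<Rightarrow> mat5 \<Rightarrow> mat5" where
  "Ad g X = g ** X ** matrix_inv g"

text \<open>Wang's condition for a linear map alpha : so(5) -> so(3) to define an
  SO(5)-invariant connection on SO(5) x_phi SO(3), with H = SO3sub,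
  phi : H -> SO(3) (subgroup of SO(5)) and phid its differential.\<close>
definition wang_connection ::
  "(mat5 \<Rightarrow> mat5) \<Rightarrow> (mat5 \<Rightarrow> mat5) \<Rightarrow> (mat5 \<Rightarrow> mat5) \<Rightarrow> bool" where
  "wang_connection \<phi> \<phi>d \<alpha> \<longleftrightarrow>
     (\<forall>X\<in>so3. \<alpha> X = \<phi>d X) \<and>
     (\<forall>h\<in>SO3sub. \<forall>X\<in>so5. \<alpha> (Ad h X) = Ad (\<phi> h) (\<alpha> X))"

text \<open>Trivial homomorphism phi_0 (identity of SO(3) is the 5x5 identity) and its differential.\<close>
definition phi0 :: "mat5 \<Rightarrow> mat5" where "phi0 h = mat 1"
definition phi0d :: "mat5 \<Rightarrow> mat5" where "phi0d X = 0"

definition curvature :: "(mat5 \<Rightarrow> mat5) \<Rightarrow> mat5 \<Rightarrow> mat5 \<Rightarrow> mat5" where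
  "curvature \<alpha> X Y = bracket (\<alpha> X) (\<alpha> Y) - \<alpha> (bracket X Y)"

definition wedge2 :: "nat \<Rightarrow> nat \<Rightarrow> mat5 \<Rightarrow> mat5 \<Rightarrow> real" where
  "wedge2 i j X Y = edual i X * edual j Y - edual j X * edual i Y"

definition omega :: "mat5 \<Rightarrow> mat5 \<Rightarrow> real" where
  "omega X Y = wedge2 2 5 X Y + wedge2 3 6 X Y + wedge2 4 7 X Y"

end

theory Submission
  imports Defs
begin

text \<open>For the trivial homomorphism, Wang's conditions say that \<open>\<alpha>\<close> kills \<open>so(3)\<close> and is
  invariant under \<open>Ad(SO(3))\<close>. Each of \<open>e\<^sub>2, \<dots>, e\<^sub>7\<close> is reversed by a diagonal sign matrix
  in \<open>SO(3)\<close>, so \<open>\<alpha>\<close> kills it too and \<open>\<alpha> = e\<^sup>1 \<otimes> \<alpha>(e\<^sub>1)\<close>; conversely \<open>SO(3)\<close> fixes the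
  first two basis vectors, hence the \<open>(1,2)\<close>-entry \<open>e\<^sup>1\<close> is \<open>Ad(SO(3))\<close>-invariant.
  The image of such an \<open>\<alpha>\<close> is a line, so \<open>[\<alpha>X, \<alpha>Y] = 0\<close> and the curvature is
  \<open>-e\<^sup>1([X,Y]) \<alpha>(e\<^sub>1)\<close>; a direct computation gives \<open>e\<^sup>1([X,Y]) = -\<omega>(X,Y)\<close> on \<open>so(5)\<close>.\<close>

lemma self_eq_neg_imp_zero: "(x :: 'a::real_vector) = - x \<Longrightarrow> x = 0"
  by (metis eq_neg_iff_add_eq_0 scaleR_2 scaleR_eq_0_iff zero_neq_numeral)

lemma matrix_inv_eqI:
  fixes A B :: "real^'n^'n"
  assumes "A ** B = mat 1" "B ** A = mat 1"
  shows "matrix_inv A = B"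
proof -
  have inv: "A ** matrix_inv A = mat 1 \<and> matrix_inv A ** A = mat 1"
    unfolding matrix_inv_def by (rule someI[of _ B]) (simp add: assms)
  have "matrix_inv A = matrix_inv A ** (A ** B)"
    by (simp add: assms)
  also have "\<dots> = (matrix_inv A ** A) ** B"
    by (simp add: matrix_mul_assoc)
  also have "\<dots> = B"
    by (simp add: inv)
  finally show ?thesis .
qed

lemma matrix_inv_orthogonal:
  "orthogonal_matrix (h :: real^'n^'n) \<Longrightarrow> matrix_inv h = transpose h"
  unfolding orthogonal_matrix_def by (intro matrix_inv_eqI) auto

lemma entry_eq_inner_axis: "(A :: real^'n^'m) $ i $ j = axis i 1 \<bullet> (A *v axis j 1)"
  by (simp add: matrix_vector_mult_basis inner_axis' column_def)

lemma orthogonal_transpose_fixes: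
  assumes "orthogonal_matrix h" "h *v v = v"
  shows "transpose h *v v = (v :: real^'n)"
  by (metis assms matrix_vector_mul_assoc matrix_vector_mul_lid orthogonal_matrix_def)

lemma orthogonal_conj_entry_fixed:
  fixes h X :: "real^'n^'n"
  assumes h: "orthogonal_matrix h"
    and fix_i: "h *v axis i 1 = axis i 1" and fix_j: "h *v axis j 1 = axis j 1"
  shows "(h ** X ** transpose h) $ i $ j = X $ i $ j"
proof -
  have row_i: "axis i 1 v* h = axis i 1"
    using orthogonal_transpose_fixes[OF h fix_i] by simp
  have "(h ** X ** transpose h) $ i $ j = axis i 1 \<bullet> (h *v (X *v (transpose h *v axis j 1)))"
    by (simp only: entry_eq_inner_axis matrix_vector_mul_assoc matrix_mul_assoc)
  also have "\<dots> = (axis i 1 v* h) \<bullet> (X *v axis j 1)"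
    by (simp only: orthogonal_transpose_fixes[OF h fix_j] dot_lmul_matrix)
  also have "\<dots> = X $ i $ j"
    by (simp only: row_i entry_eq_inner_axis)
  finally show ?thesis .
qed

lemma linear_transpose: "linear (transpose :: real^'n^'m \<Rightarrow> real^'m^'n)"
  by (rule linearI) (simp_all add: transpose_def vec_eq_iff)

lemma matrix_mul_neg_left: "(- A) ** B = - (A ** (B :: 'a::ring_1^'n^'k))"
  by (simp add: matrix_matrix_mult_def vec_eq_iff sum_negf)

lemma matrix_mul_neg_right: "A ** (- B) = - (A ** (B :: 'a::ring_1^'n^'k))"
  by (simp add: matrix_matrix_mult_def vec_eq_iff sum_negf)

lemma skew_conj:
  fixes h X :: "real^'n^'n"
  assumes "transpose X = - X"
  shows "transpose (h ** X ** transpose h) = - (h ** X ** transpose h)"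
  using assms
  by (simp add: matrix_transpose_mul matrix_mul_assoc matrix_mul_neg_left matrix_mul_neg_right)

lemma skew_bracket:
  "transpose X = - X \<Longrightarrow> transpose Y = - Y \<Longrightarrow> transpose (bracket X Y) = - bracket X Y"
  by (simp add: bracket_def linear_diff[OF linear_transpose] matrix_transpose_mul
      matrix_mul_neg_left matrix_mul_neg_right)

lemma subspace_skew: "subspace {X :: real^'n^'n. transpose X = - X}"
  unfolding subspace_def
  by (simp add: linear_0[OF linear_transpose] linear_add[OF linear_transpose]
      linear_scale[OF linear_transpose])

lemma bracket_scaleR_same: "bracket (a *\<^sub>R W) (b *\<^sub>R W) = 0"
proof -
  have "(x *\<^sub>R W) ** (y *\<^sub>R W) = (x * y) *\<^sub>R (W ** W)" for x y
    by (simp add: matrix_scalar_ac scalar_matrix_assoc mult.commute)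
  then show ?thesis
    by (simp add: bracket_def mult.commute)
qed

lemma skew_entry:
  assumes "transpose X = - X"
  shows "X $ j $ i = - X $ i $ j"
proof -
  have "transpose X $ i $ j = (- X) $ i $ j"
    by (simp add: assms)
  then show ?thesis
    by (simp add: transpose_def)
qed

lemma skew_diag: "transpose X = - X \<Longrightarrow> X $ i $ i = (0 :: real)"
  using skew_entry[of X i i] by simp

definition diag_mat :: "('n::finite \<Rightarrow> real) \<Rightarrow> real^'n^'n" where
  "diag_mat d = (\<chi> i j. if i = j then d i else 0)"

lemma diag_mat_mult_left: "diag_mat d ** X = (\<chi> i j. d i * X $ i $ j)"
  by (simp add: diag_mat_def matrix_matrix_mult_def vec_eq_iff if_distrib if_distribR
      cong: if_cong)

lemma diag_mat_mult_right: "X ** diag_mat d = (\<chi> i j. X $ i $ j * d j)"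
  by (simp add: diag_mat_def matrix_matrix_mult_def vec_eq_iff if_distrib if_distribR
      cong: if_cong)

lemma transpose_diag_mat [simp]: "transpose (diag_mat d) = diag_mat d"
  by (simp add: diag_mat_def transpose_def vec_eq_iff)

lemma det_diag_mat: "det (diag_mat d) = prod d UNIV"
  by (subst det_diagonal) (simp_all add: diag_mat_def)

lemma diag_mat_axis: "diag_mat d *v axis k 1 = d k *\<^sub>R axis k 1"
  unfolding matrix_vector_mult_basis by (auto simp: column_def diag_mat_def axis_def vec_eq_iff)

lemma orthogonal_diag_mat:
  assumes "\<forall>i. d i = 1 \<or> d i = -1"
  shows "orthogonal_matrix (diag_mat d)"
  unfolding orthogonal_matrix_def transpose_diag_mat diag_mat_mult_left using assms
  by (auto simp: diag_mat_def mat_def vec_eq_iff square_eq_1_iff)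

lemma Ad_diag_mat:
  assumes "\<forall>i. d i = 1 \<or> d i = -1"
  shows "Ad (diag_mat d) X = (\<chi> i j. d i * X $ i $ j * d j)"
  unfolding Ad_def matrix_inv_orthogonal[OF orthogonal_diag_mat[OF assms]]
  by (simp add: diag_mat_mult_left diag_mat_mult_right)

lemma exhaust_5:
  fixes x :: 5
  shows "x = 1 \<or> x = 2 \<or> x = 3 \<or> x = 4 \<or> x = 5"
proof (induct x)
  case (of_int z)
  then have "z = 0 \<or> z = 1 \<or> z = 2 \<or> z = 3 \<or> z = 4" by fastforce
  then show ?case by auto
qed

lemma forall_5: "(\<forall>i::5. P i) \<longleftrightarrow> P 1 \<and> P 2 \<and> P 3 \<and> P 4 \<and> P 5"
  by (metis exhaust_5)

lemma UNIV_5: "(UNIV :: 5 set) = {1, 2, 3, 4, 5}"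
  using exhaust_5 by auto

lemma idx_simps [simp]: "idx (Suc 0) = 1" "idx 2 = 2" "idx 3 = 3" "idx 4 = 4" "idx 5 = 5"
  by (simp_all add: idx_def)

lemma skew_eq_sum_ebas:
  assumes "transpose X = - X"
  shows "X = (\<Sum>k\<in>{1..10}. edual k X *\<^sub>R ebas k)"
proof -
  have lower: "X $ 2 $ 1 = - X $ 1 $ 2" "X $ 3 $ 1 = - X $ 1 $ 3" "X $ 4 $ 1 = - X $ 1 $ 4"
    "X $ 5 $ 1 = - X $ 1 $ 5" "X $ 3 $ 2 = - X $ 2 $ 3" "X $ 4 $ 2 = - X $ 2 $ 4"
    "X $ 5 $ 2 = - X $ 2 $ 5" "X $ 4 $ 3 = - X $ 3 $ 4" "X $ 5 $ 3 = - X $ 3 $ 5"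
    "X $ 4 $ 5 = - X $ 5 $ 4"
    by (rule skew_entry[OF assms])+
  have "{1..10::nat} = {1, 2, 3, 4, 5, 6, 7, 8, 9, 10}"
    by (simp add: numeral_eq_Suc atLeastAtMostSuc_conv insert_commute)
  then show ?thesis
    unfolding vec_eq_iff forall_5
    by (simp add: edual_def ent_def ebas_def Emat_def bpos_def lower skew_diag[OF assms])
qed

lemma ebas_so5: "k \<in> {1..10} \<Longrightarrow> ebas k \<in> so5"
  unfolding so5_def by (rule span_base) auto

lemma ebas_so3: "k \<in> {8..10} \<Longrightarrow> ebas k \<in> so3"
  unfolding so3_def by (rule span_base) auto

lemma so3_subset_so5: "so3 \<subseteq> so5"
  unfolding so3_def so5_def by (rule span_mono) auto

lemma mspace_subset_so5: "mspace \<subseteq> so5"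
  unfolding mspace_def so5_def by (rule span_mono) auto

lemma transpose_Emat: "transpose (Emat i j) = Emat j i"
  by (auto simp: Emat_def transpose_def vec_eq_iff)

lemma skew_ebas: "transpose (ebas k) = - ebas k"
  by (simp add: ebas_def linear_diff[OF linear_transpose] transpose_Emat)

lemma so5_iff_skew: "X \<in> so5 \<longleftrightarrow> transpose X = - X"
proof
  assume "X \<in> so5"
  then show "transpose X = - X"
    unfolding so5_def
    by (rule span_induct[OF _ subspace_skew[unfolded mem_Collect_eq]]) (auto simp: skew_ebas)
next
  assume "transpose X = - X"
  then show "X \<in> so5"
    unfolding so5_def by (subst skew_eq_sum_ebas) (auto intro: span_sum span_scale span_base)
qed

lemma so3_coords:
  assumes "w \<in> so3"
  obtains b8 b9 b10 where "w = b8 *\<^sub>R ebas 8 + b9 *\<^sub>R ebas 9 + b10 *\<^sub>R ebas 10"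
proof -
  have "{8..10::nat} = {8, 9, 10}"
    by auto
  then obtain b8 b9 b10 where "w - b8 *\<^sub>R ebas 8 - b9 *\<^sub>R ebas 9 - b10 *\<^sub>R ebas 10 \<in> span {}"
    using assms unfolding so3_def by (auto simp: span_breakdown_eq)
  then show thesis
    by (intro that[of b8 b9 b10]) (simp add: algebra_simps)
qed

lemma linear_edual: "linear (edual k)"
  by (rule linearI) (simp_all add: edual_def ent_def)

lemma edual1_ebas: "edual 1 (ebas k) = (if k = 1 then 1 else 0)"
  by (auto simp: edual_def ent_def ebas_def Emat_def bpos_def)

lemma edual1_so3:
  assumes "X \<in> so3"
  shows "edual 1 X = 0"
proof (rule linear_eq_on_span[OF linear_edual linear_zero])
  show "X \<in> span (ebas ` {8..10})"
    using assms by (simp add: so3_def)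
qed (auto simp: edual_def ent_def ebas_def Emat_def bpos_def)

lemma edual1_bracket:
  assumes "transpose X = - X" "transpose Y = - Y"
  shows "edual 1 (bracket X Y) = - omega X Y"
proof -
  have entry_12: "(A ** B) $ 1 $ 2 =
      A $ 1 $ 1 * B $ 1 $ 2 + A $ 1 $ 2 * B $ 2 $ 2 + A $ 1 $ 3 * B $ 3 $ 2
      + A $ 1 $ 4 * B $ 4 $ 2 + A $ 1 $ 5 * B $ 5 $ 2" for A B :: mat5
    unfolding matrix_matrix_mult_def UNIV_5 by (simp add: add.assoc)
  show ?thesis
    by (simp add: bracket_def entry_12 omega_def wedge2_def edual_def ent_def bpos_def algebra_simps
        skew_diag[OF assms(1)] skew_diag[OF assms(2)]
        skew_entry[OF assms(1), of 3 2] skew_entry[OF assms(1), of 4 2] skew_entry[OF assms(1), of 5 2]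
        skew_entry[OF assms(2), of 3 2] skew_entry[OF assms(2), of 4 2] skew_entry[OF assms(2), of 5 2])
qed

lemma Ad_SO5: "h \<in> SO5 \<Longrightarrow> Ad h X = h ** X ** transpose h"
  by (simp add: Ad_def SO5_def matrix_inv_orthogonal)

lemma Ad_SO5_so5: "h \<in> SO5 \<Longrightarrow> X \<in> so5 \<Longrightarrow> Ad h X \<in> so5"
  by (simp add: Ad_SO5 so5_iff_skew skew_conj)

lemma Ad_mat_1: "Ad (mat 1) X = X"
  by (simp add: Ad_def matrix_inv_eqI)

lemma edual1_Ad_SO3sub: "h \<in> SO3sub \<Longrightarrow> edual 1 (Ad h X) = edual 1 X"
  unfolding SO3sub_def
  by (auto simp: Ad_SO5 edual_def ent_def bpos_def SO5_def intro!: orthogonal_conj_entry_fixed)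

lemma diag_mat_SO3sub:
  assumes "\<forall>i. d i = 1 \<or> d i = -1" "d 1 = 1" "d 2 = 1" "d 3 * d 4 * d 5 = 1"
  shows "diag_mat d \<in> SO3sub"
proof -
  have "det (diag_mat d) = d 1 * d 2 * d 3 * d 4 * d 5"
    unfolding det_diag_mat UNIV_5 by simp
  then show ?thesis
    using assms by (simp add: SO3sub_def SO5_def orthogonal_diag_mat diag_mat_axis mult.assoc)
qed

lemma Ad_diag_mat_ebas:
  assumes "\<forall>i. d i = 1 \<or> d i = -1"
  shows "Ad (diag_mat d) (ebas k) = (d (idx (fst (bpos k))) * d (idx (snd (bpos k)))) *\<^sub>R ebas k"
  by (auto simp: Ad_diag_mat[OF assms] ebas_def Emat_def vec_eq_iff)

lemma ebas_reversed_by_SO3sub: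
  assumes "k \<in> {2..7}"
  obtains h where "h \<in> SO3sub" "Ad h (ebas k) = - ebas k"
proof -
  \<comment> \<open>Two sign changes among the coordinates 3, 4, 5 keep the determinant 1 and fix \<open>e\<^sub>1, e\<^sub>2\<close>.\<close>
  define flip :: "5 \<Rightarrow> 5 \<Rightarrow> real" where "flip q i = (if i = 3 \<or> i = q then -1 else 1)" for q i
  have sign: "\<forall>i. flip q i = 1 \<or> flip q i = -1" for q
    by (simp add: flip_def)
  have "diag_mat (flip q) \<in> SO3sub" if "q = 4 \<or> q = 5" for q
    using that by (intro diag_mat_SO3sub) (auto simp: flip_def)
  moreover have "Ad (diag_mat (flip 4)) (ebas k) = - ebas k \<or> Ad (diag_mat (flip 5)) (ebas k) = - ebas k"
  proof -
    have "k = 2 \<or> k = 3 \<or> k = 4 \<or> k = 5 \<or> k = 6 \<or> k = 7"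
      using assms by auto
    then show ?thesis
      by (elim disjE) (simp_all add: Ad_diag_mat_ebas[OF sign] bpos_def flip_def)
  qed
  ultimately show thesis
    using that by blast
qed

lemma wang_connection_phi0_iff:
  "wang_connection phi0 phi0d \<alpha> \<longleftrightarrow>
     (\<forall>X\<in>so3. \<alpha> X = 0) \<and> (\<forall>h\<in>SO3sub. \<forall>X\<in>so5. \<alpha> (Ad h X) = \<alpha> X)"
  by (simp add: wang_connection_def phi0_def phi0d_def Ad_mat_1)

lemma wang_connection_phi0_factors:
  assumes lin: "linear \<alpha>" and W: "wang_connection phi0 phi0d \<alpha>" and X: "X \<in> so5"
  shows "\<alpha> X = edual 1 X *\<^sub>R \<alpha> (ebas 1)"
proof -
  have kill_so3: "\<forall>X\<in>so3. \<alpha> X = 0" and inv: "\<forall>h\<in>SO3sub. \<forall>X\<in>so5. \<alpha> (Ad h X) = \<alpha> X"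
    using W by (simp_all add: wang_connection_phi0_iff)
  have on_basis: "\<alpha> (ebas k) = edual 1 (ebas k) *\<^sub>R \<alpha> (ebas 1)" if k: "k \<in> {1..10}" for k
  proof -
    consider "k = 1" | "k \<in> {2..7}" | "k \<in> {8..10}"
      using k by fastforce
    then show ?thesis
    proof cases
      case 1
      then show ?thesis
        using edual1_ebas[of 1] by simp
    next
      case 2
      then obtain h where h: "h \<in> SO3sub" "Ad h (ebas k) = - ebas k"
        by (rule ebas_reversed_by_SO3sub)
      then have "\<alpha> (ebas k) = - \<alpha> (ebas k)"
        using inv ebas_so5[OF k] by (metis linear_neg[OF lin])
      then show ?thesis
        using 2 edual1_ebas[of k] by (simp add: self_eq_neg_imp_zero)
    next
      case 3
      then show ?thesis
        using kill_so3 ebas_so3 edual1_ebas[of k] by simp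
    qed
  qed
  have "linear (\<lambda>X. edual 1 X *\<^sub>R \<alpha> (ebas 1))"
    by (rule linearI) (simp_all add: edual_def ent_def scaleR_add_left)
  from linear_eq_on_span[OF lin this] show ?thesis
    using X on_basis unfolding so5_def by blast
qed

lemma wang_connection_phi0_if_factors:
  assumes \<alpha>: "\<forall>X\<in>so5. \<alpha> X = edual 1 X *\<^sub>R w"
  shows "wang_connection phi0 phi0d \<alpha>"
  unfolding wang_connection_phi0_iff
proof (intro conjI ballI)
  fix X
  assume "X \<in> so3"
  then show "\<alpha> X = 0"
    using \<alpha> so3_subset_so5 edual1_so3 by auto
next
  fix h X
  assume h: "h \<in> SO3sub" and X: "X \<in> so5"
  then have "Ad h X \<in> so5"
    using Ad_SO5_so5 by (auto simp: SO3sub_def)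
  then show "\<alpha> (Ad h X) = \<alpha> X"
    using \<alpha> X edual1_Ad_SO3sub[OF h, of X] by simp
qed

lemma curvature_factored_eq_omega:
  assumes \<alpha>: "\<forall>X\<in>so5. \<alpha> X = edual 1 X *\<^sub>R w" and X: "X \<in> so5" and Y: "Y \<in> so5"
  shows "curvature \<alpha> X Y = omega X Y *\<^sub>R w"
proof -
  have skew: "transpose X = - X" "transpose Y = - Y"
    using X Y by (simp_all add: so5_iff_skew)
  then have "bracket X Y \<in> so5"
    by (simp add: so5_iff_skew skew_bracket)
  then have "\<alpha> (bracket X Y) = edual 1 (bracket X Y) *\<^sub>R w"
    using \<alpha> by blast
  also have "\<dots> = - omega X Y *\<^sub>R w"
    using edual1_bracket[OF skew] by simp
  finally show ?thesis
    using \<alpha> X Y by (simp add: curvature_def bracket_scaleR_same)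
qed

theorem lemma4p4:
  fixes \<alpha> :: "mat5 \<Rightarrow> mat5"
  assumes "linear \<alpha>"
    and "\<forall>X\<in>so5. \<alpha> X \<in> so3"
  shows "(wang_connection phi0 phi0d \<alpha> \<longleftrightarrow>
           (\<exists>b8 b9 b10 :: real. \<forall>X\<in>so5.
              \<alpha> X = edual 1 X *\<^sub>R (b8 *\<^sub>R ebas 8 + b9 *\<^sub>R ebas 9 + b10 *\<^sub>R ebas 10)))
       \<and> (wang_connection phi0 phi0d \<alpha> \<longrightarrow>
           (\<exists>v\<in>so3. \<forall>X\<in>mspace. \<forall>Y\<in>mspace. curvature \<alpha> X Y = omega X Y *\<^sub>R v))"
proof -
  let ?w = "\<alpha> (ebas 1)"
  have w: "?w \<in> so3"
    using assms(2) ebas_so5[of 1] by simp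
  have factors: "\<forall>X\<in>so5. \<alpha> X = edual 1 X *\<^sub>R ?w" if "wang_connection phi0 phi0d \<alpha>"
    using wang_connection_phi0_factors[OF assms(1) that] by blast
  obtain b8 b9 b10 where w_coords: "?w = b8 *\<^sub>R ebas 8 + b9 *\<^sub>R ebas 9 + b10 *\<^sub>R ebas 10"
    using so3_coords[OF w] .
  show ?thesis
  proof (intro conjI iffI impI)
    assume "wang_connection phi0 phi0d \<alpha>"
    then show "\<exists>b8 b9 b10 :: real. \<forall>X\<in>so5.
        \<alpha> X = edual 1 X *\<^sub>R (b8 *\<^sub>R ebas 8 + b9 *\<^sub>R ebas 9 + b10 *\<^sub>R ebas 10)"
      using factors w_coords by metis
  next
    assume "\<exists>b8 b9 b10 :: real. \<forall>X\<in>so5.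
        \<alpha> X = edual 1 X *\<^sub>R (b8 *\<^sub>R ebas 8 + b9 *\<^sub>R ebas 9 + b10 *\<^sub>R ebas 10)"
    then show "wang_connection phi0 phi0d \<alpha>"
      by (auto intro: wang_connection_phi0_if_factors)
  next
    assume "wang_connection phi0 phi0d \<alpha>"
    then show "\<exists>v\<in>so3. \<forall>X\<in>mspace. \<forall>Y\<in>mspace. curvature \<alpha> X Y = omega X Y *\<^sub>R v"
      using w factors curvature_factored_eq_omega mspace_subset_so5 by blast
  qed
qed

end
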